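(* Let $p$ be an odd prime, $m\ge 2$ an integer, $q=p^m$. Consider the map $\tau$ sending a pair of integers $(q_1,q_2)$ with $q_1,q_2,q_1+q_2,q_1-q_2$ all $\not\equiv 0\pmod q$ to the $m$-tuple of polynomials \[\tau(q_1,q_2)=\big(\psi(q_1,q_2),\ \alpha^{(1)}(q_1,q_2),\dots,\alpha^{(m-1)}(q_1,q_2)\big).\] Then $\tau$ takes at most $m^2$ distinct values.
   Context: Let $\gamma=e^{2\pi i/q}$. Let $A$ be the set of residues mod $q$ (in $\{1,\dots,q-1\}$) coprime to $q$, and for $1\le j\le m-1$ let $B_j=\{x\in\{1,\dots,q-1\}: p^j\mid x,\ p^{j+1}\nmid x\}$. For a pair $(q_1,q_2)$ define $\psi(q_1,q_2)(z)=\sum_{l\in A}\prod_{i=1}^{2}(z-\gamma^{q_il})(z-\gamma^{-q_il})$ and $\alpha^{(j)}(q_1,q_2)(z)=\sum_{l\in B_j}\prod_{i=1}^{2}(z-\gamma^{q_il})(z-\gamma^{-q_il})$, polynomials in $\mathbf{Q}(\gamma)[z]$. *)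

theory Defs
  imports "HOL-Analysis.Analysis" "HOL-Computational_Algebra.Polynomial"
begin

definition gam :: "nat \<Rightarrow> complex" where
  "gam q = exp (2 * of_real pi * \<i> / of_nat q)"

definition setA :: "nat \<Rightarrow> int set" where
  "setA q = {l \<in> {1..int q - 1}. coprime l (int q)}"

definition setB :: "nat \<Rightarrow> nat \<Rightarrow> nat \<Rightarrow> int set" where
  "setB p q j = {x \<in> {1..int q - 1}. int p ^ j dvd x \<and> \<not> int p ^ (j + 1) dvd x}"

definition summand :: "nat \<Rightarrow> int \<Rightarrow> int \<Rightarrow> int \<Rightarrow> complex poly" where
  "summand q q1 q2 l =
    
     ([:- (gam q powi (q1 * l)), 1:] * [:- (gam q powi (- (q1 * l))), 1:]) *
     ([:- (gam q powi (q2 * l)), 1:] * [:- (gam q powi (- (q2 * l))), 1:])"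

definition psi :: "nat \<Rightarrow> int \<Rightarrow> int \<Rightarrow> complex poly" where
  "psi q q1 q2 = (\<Sum>l\<in>setA q. summand q q1 q2 l)"

definition alpha :: "nat \<Rightarrow> nat \<Rightarrow> nat \<Rightarrow> int \<Rightarrow> int \<Rightarrow> complex poly" where
  "alpha p q j q1 q2 = (\<Sum>l\<in>setB p q j. summand q q1 q2 l)"

definition tau :: "nat \<Rightarrow> nat \<Rightarrow> int \<Rightarrow> int \<Rightarrow> complex poly list" where
  "tau p m q1 q2 = psi (p ^ m) q1 q2 # map (\<lambda>j. alpha p (p ^ m) j q1 q2) [1..<m]"

end

theory Submission
  imports Defs "HOL-Computational_Algebra.Squarefree"
begin

(* Let q = p^m and write v(k) for the p-adic valuation of an integer k.

   Each summand of psi and alpha is (z^2 - c1 z + 1)(z^2 - c2 z + 1) with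
   c_i = gam^(q_i l) + gam^(-q_i l); expanding it, the sum over an index set L
   is a fixed combination of card L and the "cosine sums"
   C_L(k) = sum over l in L of (gam^(kl) + gam^(-kl)) for k = q1, q2, q1+q2, q1-q2.
   The sets A and B_j are stable under multiplication by units mod q, so
   C_L(k a) = C_L(k) for a coprime to q; writing k = p^v(k) a, every C_L(k) depends
   only on v(k).  Hence tau(q1,q2) depends only on the valuation profile
   (v(q1), v(q2), v(q1+q2), v(q1-q2)), symmetrically within both pairs.
   For p odd, min(v(q1),v(q2)) = min(v(q1+q2),v(q1-q2)) and one of the pairs
   is constant, so the profile is determined up to these symmetries by
   (max(v(q1),v(q2)), max(v(q1+q2),v(q1-q2))), a pair of numbers below m.
   This gives at most m^2 values. *)


lemma gam_nonzero: "gam q \<noteq> 0"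
  by (simp add: gam_def)

lemma gam_powi_cong:
  assumes "q > 0" and "a mod int q = b mod int q"
  shows "gam q powi a = gam q powi b"
proof -
  have "gam q ^ q = exp (of_nat q * (2 * of_real pi * \<i> / of_nat q))"
    unfolding gam_def by (rule exp_of_nat_mult[symmetric])
  also have "of_nat q * (2 * of_real pi * \<i> / of_nat q) = 2 * of_real pi * (\<i>::complex)"
    using assms(1) by simp
  finally have period: "gam q powi int q = 1"
    by (simp add: power_int_of_nat)
  obtain t where "a = b + int q * t"
    using assms(2) by (metis mod_eq_dvd_iff dvdE add.commute diff_add_cancel)
  then have "gam q powi a = gam q powi b * (gam q powi int q) powi t"
    by (simp add: power_int_add power_int_mult gam_nonzero)
  with period show ?thesis by simp
qed


definition twocos :: "nat \<Rightarrow> int \<Rightarrow> complex" where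
  "twocos q k = gam q powi k + gam q powi (- k)"

text \<open>The three polynomials spanning all summands:
  (z^2+1)^2, -z(z^2+1) and z^2.\<close>
definition P0 :: "complex poly" where "P0 = [:1, 0, 2, 0, 1:]"
definition P1 :: "complex poly" where "P1 = [:0, -1, 0, -1:]"
definition P2 :: "complex poly" where "P2 = [:0, 0, 1:]"

text \<open>A summand is (z^2 - c1 z + 1)(z^2 - c2 z + 1); the coefficient c1 c2 of z^2 is
  rewritten by the product formula for cosines.\<close>
lemma summand_expand:
  "summand q q1 q2 l = P0 + smult (twocos q (q1 * l) + twocos q (q2 * l)) P1
     + smult (twocos q ((q1 + q2) * l) + twocos q ((q1 - q2) * l)) P2"
proof -
  let ?E = "\<lambda>k. gam q powi k"
  have factor: "[:- ?E k, 1:] * [:- ?E (- k), 1:] = [:1, - twocos q k, 1:]" for k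
  proof -
    have "?E k * ?E (- k) = 1" by (simp add: power_int_minus gam_nonzero)
    then show ?thesis by (simp add: twocos_def algebra_simps)
  qed
  have product: "twocos q (q1 * l) * twocos q (q2 * l) =
      twocos q ((q1 + q2) * l) + twocos q ((q1 - q2) * l)"
    by (simp add: twocos_def algebra_simps power_int_add[symmetric] gam_nonzero)
  have "summand q q1 q2 l = [:1, - twocos q (q1 * l), 1:] * [:1, - twocos q (q2 * l), 1:]"
    unfolding summand_def factor ..
  also have "\<dots> = P0 + smult (twocos q (q1 * l) + twocos q (q2 * l)) P1
      + smult (twocos q (q1 * l) * twocos q (q2 * l)) P2"
    by (simp add: P0_def P1_def P2_def algebra_simps)
  finally show ?thesis unfolding product .
qed

definition cos_sum :: "nat \<Rightarrow> int set \<Rightarrow> int \<Rightarrow> complex" where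
  "cos_sum q L k = (\<Sum>l\<in>L. twocos q (k * l))"

definition shape_poly :: "nat \<Rightarrow> int set \<Rightarrow> int \<Rightarrow> int \<Rightarrow> int \<Rightarrow> int \<Rightarrow> complex poly" where
  "shape_poly q L k1 k2 k3 k4 = smult (of_nat (card L)) P0
     + smult (cos_sum q L k1 + cos_sum q L k2) P1
     + smult (cos_sum q L k3 + cos_sum q L k4) P2"

lemma sum_summand:
  assumes "finite L"
  shows "(\<Sum>l\<in>L. summand q q1 q2 l) = shape_poly q L q1 q2 (q1 + q2) (q1 - q2)"
  unfolding summand_expand shape_poly_def cos_sum_def
  using assms by (simp add: sum.distrib smult_sum[symmetric] smult_add_left of_nat_poly)


subsection \<open>Index sets stable under the unit group\<close>

definition unit_stable :: "nat \<Rightarrow> int set \<Rightarrow> bool" where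
  "unit_stable q L \<longleftrightarrow> L \<subseteq> {1..int q - 1} \<and>
     (\<forall>a x. coprime a (int q) \<longrightarrow> x \<in> L \<longrightarrow> (a * x) mod int q \<in> L)"

lemma unit_stable_finite: "unit_stable q L \<Longrightarrow> finite L"
  unfolding unit_stable_def by (meson finite_atLeastAtMost_int finite_subset)

lemma unit_stable_bij:
  assumes L: "unit_stable q L" and a: "coprime a (int q)"
  shows "bij_betw (\<lambda>l. (a * l) mod int q) L L"
proof (rule bij_betw_imageI)
  show "inj_on (\<lambda>l. (a * l) mod int q) L"
  proof (rule inj_onI)
    fix x y assume x: "x \<in> L" and y: "y \<in> L" and "(a * x) mod int q = (a * y) mod int q"
    then have "int q dvd a * (x - y)"
      by (simp add: mod_eq_dvd_iff algebra_simps)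
    then have "int q dvd x - y"
      using a by (simp add: coprime_dvd_mult_right_iff coprime_commute)
    then have "x mod int q = y mod int q"
      by (simp add: mod_eq_dvd_iff)
    moreover have "x \<in> {1..int q - 1}" "y \<in> {1..int q - 1}"
      using L x y unfolding unit_stable_def by auto
    ultimately show "x = y" by simp
  qed
  have "(\<lambda>l. (a * l) mod int q) ` L \<subseteq> L"
    using L a unfolding unit_stable_def by auto
  then show "(\<lambda>l. (a * l) mod int q) ` L = L"
    using \<open>inj_on _ L\<close> unit_stable_finite[OF L] by (intro endo_inj_surj)
qed

lemma cos_sum_unit:
  assumes q: "q > 0" and L: "unit_stable q L" and a: "coprime a (int q)"
  shows "cos_sum q L (k * a) = cos_sum q L k"
proof -
  have "twocos q (k * a * l) = twocos q (k * ((a * l) mod int q))" for l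
  proof -
    have same: "(k * a * l) mod int q = (k * ((a * l) mod int q)) mod int q"
      by (simp add: mod_mult_right_eq mult.assoc)
    have negated: "(- (k * a * l)) mod int q = (- (k * ((a * l) mod int q))) mod int q"
      using same by (metis mod_minus_eq)
    show ?thesis
      unfolding twocos_def using gam_powi_cong[OF q same] gam_powi_cong[OF q negated] by simp
  qed
  then have "cos_sum q L (k * a) = (\<Sum>l\<in>L. twocos q (k * ((a * l) mod int q)))"
    unfolding cos_sum_def by simp
  also have "\<dots> = cos_sum q L k"
    unfolding cos_sum_def by (rule sum.reindex_bij_betw[OF unit_stable_bij[OF L a]])
  finally show ?thesis .
qed

lemma cos_sum_valuation:
  assumes p: "prime p" and L: "unit_stable (p ^ m) L" and k: "k \<noteq> 0"
  shows "cos_sum (p ^ m) L k = cos_sum (p ^ m) L (int p ^ multiplicity (int p) k)"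
proof -
  have p_int: "prime (int p)" using p by simp
  then have "\<not> is_unit (int p)" using not_prime_unit by blast
  then obtain a where k_eq: "k = int p ^ multiplicity (int p) k * a" and a: "\<not> int p dvd a"
    using multiplicity_decompose'[OF k] by blast
  have "coprime a (int p)"
    using prime_imp_coprime[OF p_int a] by (simp add: coprime_commute)
  then have "coprime a (int (p ^ m))" by simp
  moreover have "p ^ m > 0" using p prime_gt_0_nat by simp
  ultimately show ?thesis
    by (subst k_eq, intro cos_sum_unit L)
qed

lemma unit_mult_mod_range:
  fixes q :: int
  assumes "coprime a q" and x: "x \<in> {1..q - 1}"
  shows "(a * x) mod q \<in> {1..q - 1}"
proof -
  have "(a * x) mod q \<noteq> 0"
  proof
    assume "(a * x) mod q = 0"
    then have "q dvd x"
      using assms(1) by (auto simp: coprime_dvd_mult_right_iff coprime_commute)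
    with x show False using zdvd_imp_le[of q x] by auto
  qed
  moreover have "0 \<le> (a * x) mod q" "(a * x) mod q < q" using x by auto
  ultimately show ?thesis by auto
qed

lemma unit_stable_setA: "unit_stable q (setA q)"
  unfolding unit_stable_def setA_def
  using unit_mult_mod_range by (auto simp: coprime_commute[of _ "int q"])

lemma unit_stable_setB:
  assumes p: "prime p"
  shows "unit_stable (p ^ m) (setB p (p ^ m) j)"
  unfolding unit_stable_def
proof (intro conjI allI impI)
  fix a x
  assume a: "coprime a (int (p ^ m))" and x: "x \<in> setB p (p ^ m) j"
  have "int p ^ j \<le> x" "x < int p ^ m"
    using x unfolding setB_def by (auto intro: zdvd_imp_le)
  moreover have "int p > 1" using prime_gt_1_nat[OF p] by simp
  ultimately have "j < m"
    using power_strict_increasing_iff[of "int p" j m] by linarith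
  then have "coprime a (int p)" using a by simp
  have dvd_preserved: "int p ^ i dvd (a * x) mod int (p ^ m) \<longleftrightarrow> int p ^ i dvd x"
    if "i \<le> m" for i
  proof -
    have "int p ^ i dvd int (p ^ m)" using that by (simp add: le_imp_power_dvd)
    then have "int p ^ i dvd (a * x) mod int (p ^ m) \<longleftrightarrow> int p ^ i dvd a * x"
      by (simp add: dvd_mod_iff)
    also have "\<dots> \<longleftrightarrow> int p ^ i dvd x"
      using \<open>coprime a (int p)\<close> by (simp add: coprime_dvd_mult_right_iff coprime_commute)
    finally show ?thesis .
  qed
  then show "(a * x) mod int (p ^ m) \<in> setB p (p ^ m) j"
    using x unit_mult_mod_range[OF a] dvd_preserved[of j] dvd_preserved[of "j + 1"] \<open>j < m\<close>
    unfolding setB_def by auto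
qed (auto simp: setB_def)


subsection \<open>Valuations of q1, q2, q1 + q2, q1 - q2\<close>

lemma multiplicity_below:
  assumes "\<not> int (p ^ m) dvd k"
  shows "multiplicity (int p) k < m"
proof (rule ccontr)
  assume "\<not> multiplicity (int p) k < m"
  then have "int p ^ m dvd k" by (intro multiplicity_dvd') simp
  with assms show False by simp
qed

lemma valuation_balance:
  fixes p :: nat and x y :: int
  assumes p: "prime p" "odd p" and nz: "x \<noteq> 0" "y \<noteq> 0" "x + y \<noteq> 0" "x - y \<noteq> 0"
  defines "v \<equiv> multiplicity (int p)"
  shows "min (v x) (v y) = min (v (x + y)) (v (x - y))"
    and "v x = v y \<or> v (x + y) = v (x - y)"
proof -
  have "prime (int p)" using p by simp
  then have nonunit: "\<not> is_unit (int p)" using not_prime_unit by blast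
  have dvd_iff: "int p ^ n dvd z \<longleftrightarrow> n \<le> v z" if "z \<noteq> 0" for n z
    unfolding v_def using power_dvd_iff_le_multiplicity[OF that nonunit] .
  let ?\<mu> = "min (v x) (v y)" and ?\<nu> = "min (v (x + y)) (v (x - y))"
  have "int p ^ ?\<mu> dvd x" "int p ^ ?\<mu> dvd y"
    using dvd_iff nz by auto
  then have "int p ^ ?\<mu> dvd x + y" "int p ^ ?\<mu> dvd x - y"
    by (simp_all add: dvd_add dvd_diff)
  then have "?\<mu> \<le> v (x + y)" "?\<mu> \<le> v (x - y)"
    using dvd_iff[OF nz(3)] dvd_iff[OF nz(4)] by simp_all
  then have "?\<mu> \<le> ?\<nu>" by simp
  moreover have "?\<nu> \<le> ?\<mu>"
  proof -
    have sum: "int p ^ ?\<nu> dvd x + y" and diff: "int p ^ ?\<nu> dvd x - y"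
      using dvd_iff nz by auto
    have "2 * x = (x + y) + (x - y)" "2 * y = (x + y) - (x - y)" by simp_all
    then have "int p ^ ?\<nu> dvd 2 * x" "int p ^ ?\<nu> dvd 2 * y"
      using dvd_add[OF sum diff] dvd_diff[OF sum diff] by simp_all
    moreover have "coprime (int p ^ ?\<nu>) 2"
      using p(2) by (simp add: coprime_commute[of _ 2])
    ultimately have "int p ^ ?\<nu> dvd x" "int p ^ ?\<nu> dvd y"
      by (simp_all add: coprime_dvd_mult_right_iff)
    then show ?thesis using dvd_iff nz by simp
  qed
  ultimately show "?\<mu> = ?\<nu>" by (rule antisym)
  txt \<open>If the valuations of x and y differ, the smaller one is that of both x + y and x - y.\<close>
  show "v x = v y \<or> v (x + y) = v (x - y)"
  proof (cases "v x < v y")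
    case True
    then have "v (x + y) = v x" "v (x - y) = v x"
      using multiplicity_sum_lt[of "int p" x y] multiplicity_sum_lt[of "int p" x "- y"] nz
      unfolding v_def by simp_all
    then show ?thesis by simp
  next
    case False
    moreover have "v (x + y) = v y" "v (x - y) = v y" if "v y < v x"
      using multiplicity_sum_lt[of "int p" y x] multiplicity_sum_lt[of "int p" "- y" x] nz that
      unfolding v_def by (simp_all add: add.commute)
    ultimately show ?thesis by linarith
  qed
qed


subsection \<open>tau as a function of the valuation profile\<close>

text \<open>The value of tau on pairs whose valuation profile is (a, b, c, d).\<close>
definition tau_profile :: "nat \<Rightarrow> nat \<Rightarrow> nat \<Rightarrow> nat \<Rightarrow> nat \<Rightarrow> nat \<Rightarrow> complex poly list" where
  "tau_profile p m a b c d =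
     (let sh = (\<lambda>L. shape_poly (p ^ m) L (int p ^ a) (int p ^ b) (int p ^ c) (int p ^ d))
      in sh (setA (p ^ m)) # map (\<lambda>j. sh (setB p (p ^ m) j)) [1..<m])"

lemma tau_eq_profile:
  assumes p: "prime p" and nz: "q1 \<noteq> 0" "q2 \<noteq> 0" "q1 + q2 \<noteq> 0" "q1 - q2 \<noteq> 0"
  shows "tau p m q1 q2 = tau_profile p m (multiplicity (int p) q1) (multiplicity (int p) q2)
           (multiplicity (int p) (q1 + q2)) (multiplicity (int p) (q1 - q2))"
proof -
  have "(\<Sum>l\<in>L. summand (p ^ m) q1 q2 l) =
      shape_poly (p ^ m) L (int p ^ multiplicity (int p) q1) (int p ^ multiplicity (int p) q2)
        (int p ^ multiplicity (int p) (q1 + q2)) (int p ^ multiplicity (int p) (q1 - q2))"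
    if L: "unit_stable (p ^ m) L" for L
    unfolding sum_summand[OF unit_stable_finite[OF L]] shape_poly_def
    using cos_sum_valuation[OF p L nz(1)] cos_sum_valuation[OF p L nz(2)]
      cos_sum_valuation[OF p L nz(3)] cos_sum_valuation[OF p L nz(4)] by simp
  then show ?thesis
    unfolding tau_def tau_profile_def psi_def alpha_def
    using unit_stable_setA unit_stable_setB[OF p] by simp
qed

lemma tau_profile_swap:
  "tau_profile p m a b c d = tau_profile p m b a c d"
  "tau_profile p m a b c d = tau_profile p m a b d c"
  unfolding tau_profile_def shape_poly_def by (simp_all add: add.commute)

lemma tau_profile_sort:
  "tau_profile p m a b c d = tau_profile p m (min a b) (max a b) (min c d) (max c d)"
  by (cases "a \<le> b"; cases "c \<le> d") (simp_all add: min_def max_def tau_profile_swap)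

lemma tau_profile_by_maxima:
  assumes "min a b = min c d" and "a = b \<or> c = d"
  shows "tau_profile p m a b c d =
           tau_profile p m (min (max a b) (max c d)) (max a b) (min (max a b) (max c d)) (max c d)"
proof -
  have "min a b = min (max a b) (max c d)" "min c d = min (max a b) (max c d)"
    using assms by (auto simp: min_def max_def)
  then show ?thesis
    using tau_profile_sort[of p m a b c d] by simp
qed


text \<open>Every value of tau is tau_profile at (mu, M1, mu, M2) with M1, M2 < m and mu = min M1 M2.\<close>

theorem proposition3p1p2:
  fixes p m :: nat
  assumes "prime p" and "odd p" and "m \<ge> 2"
  shows "finite {tau p m q1 q2 | q1 q2.
                   \<not> int (p ^ m) dvd q1 \<and> \<not> int (p ^ m) dvd q2 \<and>
                   \<not> int (p ^ m) dvd (q1 + q2) \<and> \<not> int (p ^ m) dvd (q1 - q2)}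
       \<and> card {tau p m q1 q2 | q1 q2.
                   \<not> int (p ^ m) dvd q1 \<and> \<not> int (p ^ m) dvd q2 \<and>
                   \<not> int (p ^ m) dvd (q1 + q2) \<and> \<not> int (p ^ m) dvd (q1 - q2)} \<le> m ^ 2"
    (is "finite ?S \<and> card ?S \<le> _")
proof -
  define g where "g = (\<lambda>(M1, M2). tau_profile p m (min M1 M2) M1 (min M1 M2) M2)"
  have covered: "?S \<subseteq> g ` ({..<m} \<times> {..<m})"
  proof safe
    fix q1 q2 :: int
    assume h: "\<not> int (p ^ m) dvd q1" "\<not> int (p ^ m) dvd q2"
      "\<not> int (p ^ m) dvd (q1 + q2)" "\<not> int (p ^ m) dvd (q1 - q2)"
    let ?v = "multiplicity (int p)"
    have nonzero: "q1 \<noteq> 0" "q2 \<noteq> 0" "q1 + q2 \<noteq> 0" "q1 - q2 \<noteq> 0" using h by auto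
    note balance = valuation_balance[OF assms(1,2) nonzero]
    have "tau p m q1 q2 = g (max (?v q1) (?v q2), max (?v (q1 + q2)) (?v (q1 - q2)))"
      unfolding tau_eq_profile[OF assms(1) nonzero] g_def
      using tau_profile_by_maxima[OF balance] by simp
    moreover have "(max (?v q1) (?v q2), max (?v (q1 + q2)) (?v (q1 - q2))) \<in> {..<m} \<times> {..<m}"
      using h by (simp add: multiplicity_below)
    ultimately show "tau p m q1 q2 \<in> g ` ({..<m} \<times> {..<m})"
      by (rule image_eqI)
  qed
  have finite_values: "finite (g ` ({..<m} \<times> {..<m}))" by simp
  have "card (g ` ({..<m} \<times> {..<m})) \<le> m ^ 2"
    using card_image_le[of "{..<m} \<times> {..<m}" g] by (simp add: card_cartesian_product power2_eq_square)
  then have "card ?S \<le> m ^ 2"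
    using card_mono[OF finite_values covered] by linarith
  with finite_subset[OF covered finite_values] show ?thesis by simp
qed

end
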